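(* Let $X$ be a compact topological space, let $D\subseteq X$, let $\overline{D}$ be the closure of $D$ in $X$, and put $\partial D:=\overline{D}\setminus D$. Let $Y$ be a Hausdorff topological space and let $f\colon\overline{D}\to Y$ be a continuous map such that $f(D)$ is open in $Y$. For each $y\in Y\setminus f(\partial D)$, let $E_y$ denote the connected component of $y$ in $Y\setminus f(\partial D)$. Then $$f(\overline{D})\subseteq Y\setminus \bigcup_{y\in Y\setminus f(\overline{D})}E_y .$$
   Context: Note that $\partial D$ is defined as $\overline{D}\setminus D$; complements are taken in $Y$. *)

theory Defs
  imports "HOL-Analysis.Analysis"
begin

end

theory Submission
  imports Defs
begin

text \<open>The image \<open>K = f(\<overline>D)\<close> is compact, hence closed in the Hausdorff space \<open>Y\<close>.
  A component \<open>E\<close> of \<open>Y - f(\<partial>D)\<close> meets \<open>K\<close> only inside the open set \<open>f(D)\<close>, so \<open>E \<inter> K\<close>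
  is clopen in \<open>E\<close>; if \<open>E\<close> contains a point outside \<open>K\<close>, connectedness forces \<open>E \<inter> K = {}\<close>.\<close>

lemma connectedin_disjoint_from_closed_with_open_trace:
  assumes "connectedin Y C" "openin Y U" "closedin Y K" "U \<subseteq> K" "C \<inter> K \<subseteq> U"
    and "y \<in> C" "y \<notin> K"
  shows "C \<inter> K = {}"
proof -
  have trace: "C \<inter> K = C \<inter> U"
    using assms(4,5) by blast
  have "openin (subtopology Y C) (C \<inter> K)"
    unfolding trace using assms(2) by (metis inf_commute openin_subtopology_Int2)
  moreover have "closedin (subtopology Y C) (C \<inter> K)"
    using assms(3) by (metis closedin_subtopology inf_commute)
  moreover have "connected_space (subtopology Y C)"
    using assms(1) by (simp add: connectedin_def)
  moreover have "y \<in> topspace (subtopology Y C) - C \<inter> K"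
    using assms(1,6,7) connectedin_subset_topspace by fastforce
  ultimately show ?thesis
    unfolding connected_space_clopen_in by blast
qed

lemma closedin_image_closure_of_compact_space:
  assumes "compact_space X" "Hausdorff_space Y"
    and "continuous_map (subtopology X (X closure_of D)) Y f"
  shows "closedin Y (f ` (X closure_of D))"
proof -
  have "compactin X (X closure_of D)"
    using assms(1) closedin_compact_space closedin_closure_of by blast
  then have "compactin (subtopology X (X closure_of D)) (X closure_of D)"
    by (simp add: compactin_subtopology)
  then have "compactin Y (f ` (X closure_of D))"
    using assms(3) image_compactin by blast
  then show ?thesis
    using assms(2) compactin_imp_closedin by blast
qed

theorem mainTheorem2:
  fixes X :: "'a topology" and Y :: "'b topology" and D :: "'a set" and f :: "'a \<Rightarrow> 'b"
  assumes "compact_space X"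
    and "D \<subseteq> topspace X"
    and "Hausdorff_space Y"
    and "continuous_map (subtopology X (X closure_of D)) Y f"
    and "openin Y (f ` D)"
  shows "f ` (X closure_of D) \<subseteq>
    topspace Y - (\<Union>y \<in> topspace Y - f ` (X closure_of D).
       connected_component_of_set
         (subtopology Y (topspace Y - f ` ((X closure_of D) - D))) y)"
proof -
  let ?K = "f ` (X closure_of D)" and ?S = "topspace Y - f ` ((X closure_of D) - D)"
  have K_closed: "closedin Y ?K"
    using assms(1,3,4) by (rule closedin_image_closure_of_compact_space)
  have "?K \<inter> connected_component_of_set (subtopology Y ?S) y = {}"
    if y: "y \<in> topspace Y - ?K" for y
  proof -
    let ?E = "connected_component_of_set (subtopology Y ?S) y"
    have "connectedin (subtopology Y ?S) ?E"
      by (rule connectedin_connected_component_of)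
    then have E: "connectedin Y ?E" "?E \<subseteq> ?S"
      by (auto simp: connectedin_subtopology)
    have "f ` D \<subseteq> ?K"
      using assms(2) closure_of_subset by blast
    moreover have "?E \<inter> ?K \<subseteq> f ` D"
      using E(2) by blast
    moreover have "y \<in> ?E"
      using y by (auto simp: connected_component_of_refl)
    ultimately show ?thesis
      using connectedin_disjoint_from_closed_with_open_trace[OF E(1) assms(5) K_closed] y by blast
  qed
  moreover have "?K \<subseteq> topspace Y"
    using K_closed closedin_subset by blast
  ultimately show ?thesis by blast
qed

end
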